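(* The signature of any matchings circuit is windable.
   Context: A matchings circuit $G$ consists of: a finite set $J$ of incidences; a finite vertex set $V$ with sets $J_v$ partitioning $J$; a set $A\subseteq J$ of external edges; a partition $E$ of $J\setminus A$ into pairs (internal edges); a rational edge-weight $w(e)\ge0$ for each $e\in E$; and a rational fugacity $\lambda(v)\ge0$ for each $v$. For $F\subseteq A\cup E$, $\deg_F(v)$ is the number of incidences in $J_v$ belonging to edges of $F$; $\mathrm{wt}_G(F)=0$ if some $\deg_F(v)\ge2$, else $\prod_{v:\deg_F(v)=0}\lambda(v)\prod_{e\in F\cap E}w(e)$. The signature $[\![G]\!]:\{0,1\}^A\to\mathbb{Q}_{\ge0}$ is $[\![G]\!](x)=\sum\mathrm{wt}_G(F)$ over $F\subseteq A\cup E$ with $F\cap A=\{a:x_a=1\}$. For $x,y\in\{0,1\}^A$, $x\oplus y$ is coordinatewise addition mod 2, $\mathbf S$ the characteristic vector of $S$; $\mathrm{Match}'(z)$ is the set of partitions of $\{i:z_i=1\}$ into blocks of size 1 or 2. $F:\{0,1\}^A\to\mathbb{Q}_{\ge0}$ is windable if there exist $B(x,y,M)\ge0$ for all $x,y$ and $M\in\mathrm{Match}'(x\oplus y)$ with $F(x)F(y)=\sum_{M\in\mathrm{Match}'(x\oplus y)}B(x,y,M)$ for all $x,y$, and $B(x,y,M)=B(x\oplus\mathbf S,y\oplus\mathbf S,M)$ for all $x,y$ and all $S\in M\in\mathrm{Match}'(x\oplus y)$. *)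

theory Defs
  imports Main "HOL.Rat"
begin

text \<open>A matchings circuit: incidences J, vertices V, the map inc sending each incidence
to its vertex (so J_v = {j \<in> J. inc j = v}), external edges A \<subseteq> J, internal edges E
(a partition of J - A into 2-element sets), edge weights w and fugacities lam.\<close>

definition matchings_circuit ::
  "'j set \<Rightarrow> 'v set \<Rightarrow> ('j \<Rightarrow> 'v) \<Rightarrow> 'j set \<Rightarrow> 'j set set \<Rightarrow> ('j set \<Rightarrow> rat) \<Rightarrow> ('v \<Rightarrow> rat) \<Rightarrow> bool"
  where "matchings_circuit J V inc A E w lam \<longleftrightarrow>
     finite J \<and> finite V \<and> (\<forall>j\<in>J. inc j \<in> V) \<and> A \<subseteq> J \<and>
     (\<forall>e\<in>E. e \<subseteq> J - A \<and> card e = 2) \<and>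
     (\<forall>e\<in>E. \<forall>e'\<in>E. e \<noteq> e' \<longrightarrow> e \<inter> e' = {}) \<and>
     \<Union>E = J - A \<and>
     (\<forall>e\<in>E. w e \<ge> 0) \<and> (\<forall>v\<in>V. lam v \<ge> 0)"

text \<open>A subset F of A \<union> E is given by its external part FA \<subseteq> A and internal part FE \<subseteq> E.\<close>

definition deg :: "'j set \<Rightarrow> ('j \<Rightarrow> 'v) \<Rightarrow> 'j set \<Rightarrow> 'j set set \<Rightarrow> 'v \<Rightarrow> nat"
  where "deg J inc FA FE v = card {j \<in> J. inc j = v \<and> (j \<in> FA \<or> (\<exists>e\<in>FE. j \<in> e))}"

definition wt ::
  "'j set \<Rightarrow> 'v set \<Rightarrow> ('j \<Rightarrow> 'v) \<Rightarrow> ('j set \<Rightarrow> rat) \<Rightarrow> ('v \<Rightarrow> rat) \<Rightarrow> 'j set \<Rightarrow> 'j set set \<Rightarrow> rat"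
  where "wt J V inc w lam FA FE =
     (if \<exists>v\<in>V. deg J inc FA FE v \<ge> 2 then 0
      else (\<Prod>v\<in>{v\<in>V. deg J inc FA FE v = 0}. lam v) * (\<Prod>e\<in>FE. w e))"

text \<open>The signature, with x \<in> {0,1}^A represented by the set X = {a. x_a = 1} \<subseteq> A.\<close>

definition signature ::
  "'j set \<Rightarrow> 'v set \<Rightarrow> ('j \<Rightarrow> 'v) \<Rightarrow> 'j set \<Rightarrow> 'j set set \<Rightarrow> ('j set \<Rightarrow> rat) \<Rightarrow> ('v \<Rightarrow> rat) \<Rightarrow> 'j set \<Rightarrow> rat"
  where "signature J V inc A E w lam X = (\<Sum>FE\<in>Pow E. wt J V inc w lam X FE)"

definition Match' :: "'a set \<Rightarrow> 'a set set set"
  where "Match' Z = {M. (\<forall>S\<in>M. S \<subseteq> Z \<and> (card S = 1 \<or> card S = 2)) \<and>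
                        (\<forall>S\<in>M. \<forall>T\<in>M. S \<noteq> T \<longrightarrow> S \<inter> T = {}) \<and> \<Union>M = Z}"

text \<open>Windability of F : {0,1}^A \<rightarrow> Q (vectors as subsets of A; x \<oplus> y is symmetric difference).\<close>

definition windable :: "'a set \<Rightarrow> ('a set \<Rightarrow> rat) \<Rightarrow> bool"
  where "windable A F \<longleftrightarrow>
    (\<exists>B :: 'a set \<Rightarrow> 'a set \<Rightarrow> 'a set set \<Rightarrow> rat.
       (\<forall>X\<subseteq>A. \<forall>Y\<subseteq>A. \<forall>M\<in>Match' ((X - Y) \<union> (Y - X)). B X Y M \<ge> 0) \<and>
       (\<forall>X\<subseteq>A. \<forall>Y\<subseteq>A. F X * F Y = (\<Sum>M\<in>Match' ((X - Y) \<union> (Y - X)). B X Y M)) \<and>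
       (\<forall>X\<subseteq>A. \<forall>Y\<subseteq>A. \<forall>M\<in>Match' ((X - Y) \<union> (Y - X)). \<forall>S\<in>M.
          B X Y M = B ((X - S) \<union> (S - X)) ((Y - S) \<union> (S - Y)) M))"

end

theory Submission
  imports Defs
begin

text \<open>Fix \<open>X, Y \<subseteq> A\<close> and internal edge sets \<open>F, G\<close> such that \<open>X \<union> F\<close> and \<open>Y \<union> G\<close>
  are matchings (all other configurations have weight zero). The incidences covered by exactly
  one of the two configurations form a set \<open>D\<close> in which every incidence has at most one mate
  across its edge and at most one across its vertex. The two mate maps are involutions, so \<open>D\<close>
  splits into alternating paths and cycles; external incidences are fixed by the edge mate and
  are therefore path ends. The external ends pair up \<open>X \<oplus> Y\<close> into blocks of size 1 or 2, and
  \<open>B(X, Y, M)\<close> is the total weight of the pairs \<open>(F, G)\<close> inducing the pairing \<open>M\<close>. Exchanging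
  \<open>F\<close> and \<open>G\<close> along the path through a block \<open>S\<close> (and flipping \<open>S\<close> in \<open>X\<close> and \<open>Y\<close>) leaves
  \<open>D\<close>, the pairing and the product of weights unchanged and is its own inverse, which gives
  \<open>B(X, Y, M) = B(X \<oplus> S, Y \<oplus> S, M)\<close>.\<close>

section \<open>Orbits of a product of two involutions\<close>

lemma double_mod_eq_0_cases:
  fixes r n :: nat
  assumes "(r + r) mod n = 0" "r < n"
  shows "r = 0 \<or> r = n div 2"
proof -
  obtain q where q: "r + r = n * q"
    using assms(1) by (auto simp: mod_eq_0_iff_dvd elim!: dvdE)
  with assms(2) have "n * q < n * 2"
    by linarith
  then have "q < 2"
    by simp
  then have "q = 0 \<or> q = 1"
    by presburger
  with q show ?thesis
    by auto
qed

definition forward_orbit :: "('a \<Rightarrow> 'a) \<Rightarrow> 'a \<Rightarrow> 'a set" where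
  "forward_orbit f a = range (\<lambda>k. (f ^^ k) a)"

lemma funpow_in_forward_orbit: "(f ^^ k) a \<in> forward_orbit f a"
  unfolding forward_orbit_def by simp

lemma forward_orbit_self: "a \<in> forward_orbit f a"
  using funpow_in_forward_orbit[where k = 0] by simp

lemma forward_orbit_step:
  assumes "x \<in> forward_orbit f a"
  shows "f x \<in> forward_orbit f a"
proof -
  obtain k where "x = (f ^^ k) a"
    using assms unfolding forward_orbit_def by blast
  then have "f x = (f ^^ Suc k) a"
    by simp
  then show ?thesis
    by (simp only: funpow_in_forward_orbit)
qed

lemma forward_orbit_subset:
  assumes "f ` D \<subseteq> D" "a \<in> D"
  shows "forward_orbit f a \<subseteq> D"
proof -
  have "(f ^^ k) a \<in> D" for k
    by (induction k) (use assms in auto)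
  then show ?thesis
    unfolding forward_orbit_def by blast
qed

lemma forward_orbit_mono: "x \<in> forward_orbit f a \<Longrightarrow> forward_orbit f x \<subseteq> forward_orbit f a"
  by (rule forward_orbit_subset) (auto intro: forward_orbit_step)

lemma forward_orbit_period:
  assumes "inj f" "finite (forward_orbit f a)"
  obtains n where "n > 0" "(f ^^ n) a = a"
proof -
  have "{y. \<exists>n. y = (f ^^ n) a} = forward_orbit f a"
    unfolding forward_orbit_def by auto
  with assms(2) have "finite {y. \<exists>n. y = (f ^^ n) a}"
    by simp
  from funpow_inj_finite[OF assms(1) this] that show thesis
    by blast
qed

lemma forward_orbit_least_period:
  assumes "inj f" "finite (forward_orbit f a)"
  obtains n where "n > 0" "(f ^^ n) a = a" "\<And>m. (f ^^ m) a = a \<Longrightarrow> m mod n = 0"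
proof -
  define n where "n = (LEAST n. 0 < n \<and> (f ^^ n) a = a)"
  obtain n0 where "0 < n0 \<and> (f ^^ n0) a = a"
    using forward_orbit_period[OF assms] by blast
  then have n: "0 < n \<and> (f ^^ n) a = a"
    unfolding n_def by (rule LeastI)
  have "m mod n = 0" if "(f ^^ m) a = a" for m
  proof (rule ccontr)
    assume "m mod n \<noteq> 0"
    moreover have "(f ^^ (m mod n)) a = a"
      using funpow_mod_eq[OF conjunct2[OF n], of m] that by simp
    moreover have "m mod n < n"
      using n by simp
    ultimately show False
      using not_less_Least[of "m mod n" "\<lambda>n. 0 < n \<and> (f ^^ n) a = a"] unfolding n_def by simp
  qed
  with n that show thesis
    by blast
qed

lemma funpow_preimage_in_forward_orbit:
  assumes "inj f" "finite (forward_orbit f a)" "(f ^^ k) y = a"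
  shows "y \<in> forward_orbit f a"
proof -
  obtain n where n: "n > 0" "(f ^^ n) a = a"
    using forward_orbit_period[OF assms(1,2)] .
  have "k + (n * k - k) = n * k"
    using n(1) by simp
  then have "(f ^^ k) ((f ^^ (n * k - k)) a) = (f ^^ (n * k)) a"
    by (metis funpow_add comp_apply)
  also have "\<dots> = a"
    using funpow_mod_eq[OF n(2), of "n * k"] by simp
  finally have "(f ^^ k) ((f ^^ (n * k - k)) a) = (f ^^ k) y"
    using assms(3) by simp
  then have "y = (f ^^ (n * k - k)) a"
    using inj_fn[OF assms(1), of k] by (auto dest: injD)
  then show ?thesis
    by (simp add: funpow_in_forward_orbit)
qed

lemma forward_orbit_eq:
  assumes "inj f" "finite (forward_orbit f a)" "x \<in> forward_orbit f a"
  shows "forward_orbit f x = forward_orbit f a"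
proof
  show sub: "forward_orbit f x \<subseteq> forward_orbit f a"
    using forward_orbit_mono[OF assms(3)] .
  obtain k where "x = (f ^^ k) a"
    using assms(3) unfolding forward_orbit_def by blast
  then have "a \<in> forward_orbit f x"
    using funpow_preimage_in_forward_orbit[OF assms(1) finite_subset[OF sub assms(2)]] by blast
  then show "forward_orbit f a \<subseteq> forward_orbit f x"
    by (rule forward_orbit_mono)
qed

lemma funpow_comp_involutions_reflect:
  assumes \<sigma>: "\<And>x. \<sigma> (\<sigma> x) = x" and \<tau>: "\<And>x. \<tau> (\<tau> x) = x"
  shows "((\<tau> \<circ> \<sigma>) ^^ k) (\<sigma> (((\<tau> \<circ> \<sigma>) ^^ k) x)) = \<sigma> x"
proof (induction k arbitrary: x)
  case 0
  then show ?case by simp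
next
  case (Suc k)
  have "((\<tau> \<circ> \<sigma>) ^^ Suc k) (\<sigma> (((\<tau> \<circ> \<sigma>) ^^ Suc k) x))
      = (\<tau> \<circ> \<sigma>) (((\<tau> \<circ> \<sigma>) ^^ k) (\<sigma> (((\<tau> \<circ> \<sigma>) ^^ k) ((\<tau> \<circ> \<sigma>) x))))"
    by (simp only: funpow.simps(2) comp_apply funpow_swap1)
  also have "\<dots> = (\<tau> \<circ> \<sigma>) (\<sigma> ((\<tau> \<circ> \<sigma>) x))"
    by (simp only: Suc.IH)
  also have "\<dots> = \<sigma> x"
    using \<sigma> \<tau> by simp
  finally show ?case .
qed

lemma inj_comp_involutions:
  assumes "\<And>x. \<sigma> (\<sigma> x) = x" "\<And>x. \<tau> (\<tau> x) = x"
  shows "inj (\<tau> \<circ> \<sigma>)"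
  by (metis assms comp_apply injI)

context
  fixes \<sigma> \<tau> :: "'a \<Rightarrow> 'a" and a :: 'a
  assumes \<sigma>_involution: "\<And>x. \<sigma> (\<sigma> x) = x" and \<tau>_involution: "\<And>x. \<tau> (\<tau> x) = x"
    and finite_orbit: "finite (forward_orbit (\<tau> \<circ> \<sigma>) a)" and \<sigma>_fixes: "\<sigma> a = a"
begin

private lemma inj_comp: "inj (\<tau> \<circ> \<sigma>)"
  using \<sigma>_involution \<tau>_involution by (rule inj_comp_involutions)

lemma dihedral_orbit_closed:
  assumes "x \<in> forward_orbit (\<tau> \<circ> \<sigma>) a"
  shows "\<sigma> x \<in> forward_orbit (\<tau> \<circ> \<sigma>) a" "\<tau> x \<in> forward_orbit (\<tau> \<circ> \<sigma>) a"
proof -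
  obtain k where "x = ((\<tau> \<circ> \<sigma>) ^^ k) a"
    using assms unfolding forward_orbit_def by blast
  then have "((\<tau> \<circ> \<sigma>) ^^ k) (\<sigma> x) = a"
    using funpow_comp_involutions_reflect[OF \<sigma>_involution \<tau>_involution, of k a] \<sigma>_fixes by simp
  then show \<sigma>x: "\<sigma> x \<in> forward_orbit (\<tau> \<circ> \<sigma>) a"
    by (rule funpow_preimage_in_forward_orbit[OF inj_comp finite_orbit])
  show "\<tau> x \<in> forward_orbit (\<tau> \<circ> \<sigma>) a"
    using forward_orbit_step[OF \<sigma>x] \<sigma>_involution by simp
qed

lemma card_fixpoints_dihedral_orbit: "card {x \<in> forward_orbit (\<tau> \<circ> \<sigma>) a. \<sigma> x = x} \<le> 2"
proof -
  let ?\<rho> = "\<tau> \<circ> \<sigma>"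
  obtain n where "n > 0" and n: "(?\<rho> ^^ n) a = a"
    and period_dvd: "\<And>m. (?\<rho> ^^ m) a = a \<Longrightarrow> m mod n = 0"
    using forward_orbit_least_period[OF inj_comp finite_orbit] by blast
  have "{x \<in> forward_orbit ?\<rho> a. \<sigma> x = x} \<subseteq> {a, (?\<rho> ^^ (n div 2)) a}"
  proof
    fix x assume "x \<in> {x \<in> forward_orbit ?\<rho> a. \<sigma> x = x}"
    then obtain k where x: "x = (?\<rho> ^^ k) a" "\<sigma> x = x"
      unfolding forward_orbit_def by blast
    have "(?\<rho> ^^ (k + k)) a = (?\<rho> ^^ k) (\<sigma> x)"
      using x by (simp add: funpow_add)
    also have "\<dots> = a"
      using funpow_comp_involutions_reflect[OF \<sigma>_involution \<tau>_involution, of k a] \<sigma>_fixes x(1) by simp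
    finally have "(k mod n + k mod n) mod n = 0"
      using period_dvd by (metis mod_add_eq)
    then have "k mod n = 0 \<or> k mod n = n div 2"
      using \<open>n > 0\<close> by (intro double_mod_eq_0_cases) simp_all
    moreover have "x = (?\<rho> ^^ (k mod n)) a"
      using funpow_mod_eq[OF n, of k] x(1) by simp
    ultimately show "x \<in> {a, (?\<rho> ^^ (n div 2)) a}"
      by auto
  qed
  then have "card {x \<in> forward_orbit ?\<rho> a. \<sigma> x = x} \<le> card {a, (?\<rho> ^^ (n div 2)) a}"
    by (intro card_mono) auto
  also have "\<dots> \<le> 2"
    by (simp add: card_insert_if)
  finally show ?thesis .
qed

end

section \<open>Partners, splices and pairings\<close>

lemma Match'_block_subset: "M \<in> Match' Z \<Longrightarrow> S \<in> M \<Longrightarrow> S \<subseteq> Z"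
  unfolding Match'_def by blast

lemma finite_Match': "finite Z \<Longrightarrow> finite (Match' Z)"
  unfolding Match'_def by (rule finite_subset[of _ "Pow (Pow Z)"]) auto

definition partner :: "'a set \<Rightarrow> ('a \<Rightarrow> 'a \<Rightarrow> bool) \<Rightarrow> 'a \<Rightarrow> 'a" where
  "partner D R j =
     (if j \<in> D \<and> (\<exists>!k. k \<in> D \<and> k \<noteq> j \<and> R j k) then THE k. k \<in> D \<and> k \<noteq> j \<and> R j k else j)"

lemma partner_eqI:
  assumes "j \<in> D" "k \<in> D" "k \<noteq> j" "R j k" "\<And>k'. k' \<in> D \<Longrightarrow> k' \<noteq> j \<Longrightarrow> R j k' \<Longrightarrow> k' = k"
  shows "partner D R j = k"
proof -
  have unique: "\<exists>!k. k \<in> D \<and> k \<noteq> j \<and> R j k"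
    using assms by blast
  have "(THE k. k \<in> D \<and> k \<noteq> j \<and> R j k) = k"
    using assms by blast
  with assms(1) unique show ?thesis
    unfolding partner_def by (simp only: if_True simp_thms)
qed

lemma partner_fixed:
  assumes "\<not> (\<exists>k\<in>D. k \<noteq> j \<and> R j k)"
  shows "partner D R j = j"
proof -
  have "\<not> (j \<in> D \<and> (\<exists>!k. k \<in> D \<and> k \<noteq> j \<and> R j k))"
    using assms by blast
  then show ?thesis
    unfolding partner_def by (rule if_not_P)
qed

lemma partner_in:
  assumes "j \<in> D"
  shows "partner D R j \<in> D"
proof (cases "\<exists>!k. k \<in> D \<and> k \<noteq> j \<and> R j k")
  case True
  then obtain k where "k \<in> D" "k \<noteq> j" "R j k" "\<And>k'. k' \<in> D \<Longrightarrow> k' \<noteq> j \<Longrightarrow> R j k' \<Longrightarrow> k' = k"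
    by blast
  then show ?thesis
    using partner_eqI[OF assms] by metis
next
  case False
  then have "partner D R j = j"
    unfolding partner_def by (simp only: simp_thms if_False)
  with assms show ?thesis
    by simp
qed

lemma partner_partner:
  assumes "symp R" "transp R"
  shows "partner D R (partner D R j) = j"
proof (cases "j \<in> D \<and> (\<exists>!k. k \<in> D \<and> k \<noteq> j \<and> R j k)")
  case True
  then obtain k where k: "k \<in> D" "k \<noteq> j" "R j k"
    and unique: "\<And>k'. k' \<in> D \<Longrightarrow> k' \<noteq> j \<Longrightarrow> R j k' \<Longrightarrow> k' = k"
    by blast
  have "partner D R j = k"
    using True k unique by (blast intro: partner_eqI)
  moreover have "partner D R k = j"
  proof (rule partner_eqI)
    show "R k j"
      using assms(1) k(3) by (rule sympD)
    fix k' assume "k' \<in> D" "k' \<noteq> k" "R k k'"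
    then show "k' = j"
      using unique transpD[OF assms(2) k(3)] by blast
  qed (use True k in blast)+
  ultimately show ?thesis
    by simp
next
  case False
  then have "partner D R j = j"
    unfolding partner_def by (rule if_not_P)
  then show ?thesis
    by simp
qed

definition splice :: "('a \<Rightarrow> bool) \<Rightarrow> 'a set \<Rightarrow> 'a set \<Rightarrow> 'a set" where
  "splice P F G = {x \<in> F. \<not> P x} \<union> {x \<in> G. P x}"

lemma splice_subset: "F \<subseteq> H \<Longrightarrow> G \<subseteq> H \<Longrightarrow> splice P F G \<subseteq> H"
  unfolding splice_def by blast

lemma splice_splice: "splice P (splice P F G) (splice P G F) = F"
  unfolding splice_def by blast

lemma prod_splice:
  fixes f :: "'a \<Rightarrow> 'b::comm_monoid_mult"
  assumes "finite F" "finite G"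
  shows "prod f (splice P F G) * prod f (splice P G F) = prod f F * prod f G"
proof -
  have split: "prod f H = prod f {x \<in> H. \<not> P x} * prod f {x \<in> H. P x}" if "finite H" for H
  proof -
    have "prod f H = prod f ({x \<in> H. \<not> P x} \<union> {x \<in> H. P x})"
      by (rule arg_cong[where f = "prod f"]) blast
    also have "\<dots> = prod f {x \<in> H. \<not> P x} * prod f {x \<in> H. P x}"
      using that by (intro prod.union_disjoint) auto
    finally show ?thesis .
  qed
  have "prod f (splice P F G) = prod f {x \<in> F. \<not> P x} * prod f {x \<in> G. P x}"
    "prod f (splice P G F) = prod f {x \<in> G. \<not> P x} * prod f {x \<in> F. P x}"
    unfolding splice_def using assms by (auto intro: prod.union_disjoint)
  then show ?thesis
    using split[OF assms(1)] split[OF assms(2)] by (simp add: ac_simps)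
qed

locale circuit =
  fixes J :: "'j set" and V :: "'v set" and inc :: "'j \<Rightarrow> 'v" and A :: "'j set"
    and E :: "'j set set" and w :: "'j set \<Rightarrow> rat" and lam :: "'v \<Rightarrow> rat"
  assumes finite_J: "finite J" and finite_V: "finite V" and inc_in_V: "j \<in> J \<Longrightarrow> inc j \<in> V"
    and external_subset: "A \<subseteq> J" and edge_subset: "e \<in> E \<Longrightarrow> e \<subseteq> J - A"
    and card_edge: "e \<in> E \<Longrightarrow> card e = 2"
    and edges_disjoint: "e \<in> E \<Longrightarrow> e' \<in> E \<Longrightarrow> e \<noteq> e' \<Longrightarrow> e \<inter> e' = {}"
    and Union_edges: "\<Union>E = J - A"
    and weight_nonneg: "e \<in> E \<Longrightarrow> 0 \<le> w e" and fugacity_nonneg: "v \<in> V \<Longrightarrow> 0 \<le> lam v"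

lemma circuitI: "matchings_circuit J V inc A E w lam \<Longrightarrow> circuit J V inc A E w lam"
  by unfold_locales (auto simp: matchings_circuit_def)

context circuit
begin

lemma finite_E: "finite E"
  using finite_J edge_subset by (meson Diff_subset PowI finite_Pow_iff finite_subset subsetI subset_trans)

lemma edge_unique: "e \<in> E \<Longrightarrow> e' \<in> E \<Longrightarrow> j \<in> e \<Longrightarrow> j \<in> e' \<Longrightarrow> e = e'"
  using edges_disjoint by blast

definition covered :: "'j set \<Rightarrow> 'j set set \<Rightarrow> 'j set" where
  "covered X F = X \<union> \<Union>F"

definition is_matching :: "'j set \<Rightarrow> 'j set set \<Rightarrow> bool" where
  "is_matching X F \<longleftrightarrow> (\<forall>v\<in>V. deg J inc X F v \<le> 1)"

lemma deg_eq_card_covered: "deg J inc X F v = card {j \<in> J. inc j = v \<and> j \<in> covered X F}"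
  unfolding deg_def covered_def by simp

lemma is_matching_inj:
  assumes "is_matching X F" "j \<in> J \<inter> covered X F" "k \<in> J \<inter> covered X F" "inc j = inc k"
  shows "j = k"
proof -
  let ?S = "{i \<in> J. inc i = inc j \<and> i \<in> covered X F}"
  have "card ?S \<le> 1"
    using assms(1,2) inc_in_V unfolding is_matching_def deg_eq_card_covered by blast
  moreover have "finite ?S"
    using finite_J by simp
  ultimately show ?thesis
    using assms(2-4) by (auto simp: card_le_Suc0_iff_eq)
qed

lemma wt_is_matching:
  assumes "is_matching X F"
  shows "wt J V inc w lam X F = (\<Prod>v\<in>{v \<in> V. deg J inc X F v = 0}. lam v) * (\<Prod>e\<in>F. w e)"
proof -
  have "\<not> (\<exists>v\<in>V. 2 \<le> deg J inc X F v)"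
    using assms unfolding is_matching_def by force
  then show ?thesis
    unfolding wt_def by simp
qed

lemma wt_not_matching:
  assumes "\<not> is_matching X F"
  shows "wt J V inc w lam X F = 0"
proof -
  have "\<exists>v\<in>V. 2 \<le> deg J inc X F v"
    using assms unfolding is_matching_def by force
  then show ?thesis
    unfolding wt_def by simp
qed

lemma wt_nonneg: "F \<subseteq> E \<Longrightarrow> 0 \<le> wt J V inc w lam X F"
  unfolding wt_def using weight_nonneg fugacity_nonneg by (auto intro!: mult_nonneg_nonneg prod_nonneg)

lemma covered_internal_iff:
  assumes "X \<subseteq> A" "F \<subseteq> E" "e \<in> E" "j \<in> e"
  shows "j \<in> covered X F \<longleftrightarrow> e \<in> F"
  using assms edge_subset edge_unique unfolding covered_def by blast

lemma covered_external_iff: "F \<subseteq> E \<Longrightarrow> j \<in> A \<Longrightarrow> j \<in> covered X F \<longleftrightarrow> j \<in> X"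
  using edge_subset unfolding covered_def by blast

definition same_edge :: "'j \<Rightarrow> 'j \<Rightarrow> bool" where
  "same_edge j k \<longleftrightarrow> (\<exists>e\<in>E. j \<in> e \<and> k \<in> e)"

abbreviation edge_mate :: "'j set \<Rightarrow> 'j \<Rightarrow> 'j" where
  "edge_mate D \<equiv> partner D same_edge"

abbreviation vertex_mate :: "'j set \<Rightarrow> 'j \<Rightarrow> 'j" where
  "vertex_mate D \<equiv> partner D (\<lambda>j k. inc j = inc k)"

lemma edge_mate_edge_mate: "edge_mate D (edge_mate D j) = j"
proof (rule partner_partner)
  show "symp same_edge"
    unfolding symp_def same_edge_def by blast
  show "transp same_edge"
    unfolding transp_def same_edge_def using edge_unique by blast
qed

lemma vertex_mate_vertex_mate: "vertex_mate D (vertex_mate D j) = j"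
  by (rule partner_partner) (simp_all add: symp_def transp_def)

definition edge_closed :: "'j set \<Rightarrow> bool" where
  "edge_closed C \<longleftrightarrow> (\<forall>e\<in>E. e \<inter> C \<noteq> {} \<longrightarrow> e \<subseteq> C)"

definition two_per_vertex :: "'j set \<Rightarrow> bool" where
  "two_per_vertex D \<longleftrightarrow>
     (\<forall>j1\<in>D. \<forall>j2\<in>D. \<forall>j3\<in>D. inc j1 = inc j2 \<longrightarrow> inc j2 = inc j3 \<longrightarrow> j1 = j2 \<or> j2 = j3 \<or> j1 = j3)"

definition vertex_closed :: "'j set \<Rightarrow> 'j set \<Rightarrow> bool" where
  "vertex_closed D C \<longleftrightarrow> (\<forall>j\<in>C. \<forall>k\<in>D. inc k = inc j \<longrightarrow> k \<in> C)"

lemma edge_mate_eq: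
  assumes "edge_closed D" "j \<in> D" "e \<in> E" "j \<in> e" "k \<in> e" "k \<noteq> j"
  shows "edge_mate D j = k"
proof (rule partner_eqI)
  show "k \<in> D"
    using assms unfolding edge_closed_def by blast
  show "same_edge j k"
    using assms unfolding same_edge_def by blast
  fix k' assume "k' \<in> D" "k' \<noteq> j" "same_edge j k'"
  then have "k' \<in> e"
    using assms(3,4) edge_unique unfolding same_edge_def by blast
  then show "k' = k"
    using card_edge[OF assms(3)] assms(4-6) \<open>k' \<noteq> j\<close> by (auto simp: card_2_iff)
qed (use assms in auto)

lemma edge_mate_external: "j \<in> A \<Longrightarrow> edge_mate D j = j"
  using edge_subset by (intro partner_fixed) (auto simp: same_edge_def)

lemma vertex_mate_eq:
  assumes "two_per_vertex D" "j \<in> D" "k \<in> D" "k \<noteq> j" "inc j = inc k"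
  shows "vertex_mate D j = k"
  using assms unfolding two_per_vertex_def by (intro partner_eqI) metis+

subsection \<open>Alternating components\<close>

definition component :: "'j set \<Rightarrow> 'j \<Rightarrow> 'j set" where
  "component D a = forward_orbit (vertex_mate D \<circ> edge_mate D) a"

definition blocks :: "'j set \<Rightarrow> 'j set set" where
  "blocks D = (\<lambda>a. component D a \<inter> A) ` (A \<inter> D)"

definition block_component :: "'j set \<Rightarrow> 'j set \<Rightarrow> 'j set" where
  "block_component D S = \<Union> (component D ` S)"

context
  fixes D :: "'j set"
  assumes D_edge_closed: "edge_closed D" and D_two_per_vertex: "two_per_vertex D"
    and D_subset: "D \<subseteq> J"
begin

lemma component_subset: "a \<in> D \<Longrightarrow> component D a \<subseteq> D"
  unfolding component_def by (rule forward_orbit_subset) (auto intro: partner_in)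

lemma finite_component: "a \<in> D \<Longrightarrow> finite (component D a)"
  using component_subset D_subset finite_J by (meson finite_subset subset_trans)

lemma component_eq: "a \<in> D \<Longrightarrow> x \<in> component D a \<Longrightarrow> component D x = component D a"
  using finite_component unfolding component_def
  by (intro forward_orbit_eq inj_comp_involutions edge_mate_edge_mate vertex_mate_vertex_mate)

lemma mates_in_component:
  assumes "a \<in> A \<inter> D" "x \<in> component D a"
  shows "edge_mate D x \<in> component D a" "vertex_mate D x \<in> component D a"
proof -
  have "finite (forward_orbit (vertex_mate D \<circ> edge_mate D) a)"
    using finite_component assms unfolding component_def by blast
  moreover have "edge_mate D a = a"
    using edge_mate_external assms by blast
  ultimately show "edge_mate D x \<in> component D a" "vertex_mate D x \<in> component D a"
    using dihedral_orbit_closed[of "edge_mate D" "vertex_mate D",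
        OF edge_mate_edge_mate vertex_mate_vertex_mate] assms(2)
    unfolding component_def by blast+
qed

lemma edge_closed_component:
  assumes "a \<in> A \<inter> D"
  shows "edge_closed (component D a)"
  unfolding edge_closed_def
proof (intro ballI impI subsetI)
  fix e k assume e: "e \<in> E" "e \<inter> component D a \<noteq> {}" and "k \<in> e"
  then obtain j where j: "j \<in> e" "j \<in> component D a"
    by blast
  show "k \<in> component D a"
  proof (cases "k = j")
    case False
    have "j \<in> D"
      using j(2) component_subset assms by blast
    then have "edge_mate D j = k"
      using edge_mate_eq[OF D_edge_closed _ e(1) j(1) \<open>k \<in> e\<close> False] by blast
    then show ?thesis
      using mates_in_component[OF assms j(2)] by simp
  qed (use j in simp)
qed

lemma vertex_closed_component:
  assumes "a \<in> A \<inter> D"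
  shows "vertex_closed D (component D a)"
  unfolding vertex_closed_def
proof (intro ballI impI)
  fix j k assume j: "j \<in> component D a" and k: "k \<in> D" "inc k = inc j"
  show "k \<in> component D a"
  proof (cases "k = j")
    case False
    have "j \<in> D"
      using j component_subset assms by blast
    then have "vertex_mate D j = k"
      using vertex_mate_eq[OF D_two_per_vertex _ k(1) False] k(2) by simp
    then show ?thesis
      using mates_in_component[OF assms j] by simp
  qed (use j in simp)
qed

text \<open>External incidences are fixed points of the edge mate, so the component of one of them
  is a path with at most two external ends.\<close>

lemma card_component_external:
  assumes "a \<in> A \<inter> D"
  shows "card (component D a \<inter> A) \<le> 2"
proof -
  have "component D a \<inter> A \<subseteq> {x \<in> component D a. edge_mate D x = x}"
    using edge_mate_external by blast
  then have "card (component D a \<inter> A) \<le> card {x \<in> component D a. edge_mate D x = x}"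
    using finite_component assms by (intro card_mono) auto
  also have "\<dots> \<le> 2"
  proof -
    have "finite (forward_orbit (vertex_mate D \<circ> edge_mate D) a)"
      using finite_component assms unfolding component_def by blast
    moreover have "edge_mate D a = a"
      using edge_mate_external assms by blast
    ultimately show ?thesis
      unfolding component_def
      by (rule card_fixpoints_dihedral_orbit[of "edge_mate D" "vertex_mate D",
            OF edge_mate_edge_mate vertex_mate_vertex_mate])
  qed
  finally show ?thesis .
qed

lemma blocks_in_Match': "blocks D \<in> Match' (A \<inter> D)"
  unfolding Match'_def
proof (intro CollectI conjI ballI impI)
  fix S assume "S \<in> blocks D"
  then obtain a where a: "a \<in> A \<inter> D" "S = component D a \<inter> A"
    unfolding blocks_def by blast
  show "S \<subseteq> A \<inter> D"
    using a component_subset by blast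
  have "a \<in> S"
    using a forward_orbit_self unfolding component_def by fast
  moreover have "finite S"
    using a finite_component by blast
  ultimately have "card S > 0"
    by (auto simp: card_gt_0_iff)
  then show "card S = 1 \<or> card S = 2"
    using card_component_external[OF a(1)] unfolding a(2) by linarith
next
  fix S T assume "S \<in> blocks D" "T \<in> blocks D" "S \<noteq> T"
  then obtain a b where "a \<in> A \<inter> D" "S = component D a \<inter> A" "b \<in> A \<inter> D" "T = component D b \<inter> A"
    unfolding blocks_def by blast
  then show "S \<inter> T = {}"
    using component_eq \<open>S \<noteq> T\<close> by blast
next
  show "\<Union> (blocks D) = A \<inter> D"
    unfolding blocks_def using component_subset forward_orbit_self
    unfolding component_def by fast
qed

lemma blockE:
  assumes "S \<in> blocks D"
  obtains a where "a \<in> A \<inter> D" "S = component D a \<inter> A" "block_component D S = component D a"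
proof -
  obtain a where a: "a \<in> A \<inter> D" "S = component D a \<inter> A"
    using assms unfolding blocks_def by blast
  have "block_component D S = component D a"
    unfolding block_component_def using a component_eq forward_orbit_self
    unfolding component_def by fast
  with a that show thesis
    by blast
qed

lemma block_component_props:
  assumes "S \<in> blocks D"
  shows "block_component D S \<subseteq> D" "block_component D S \<inter> A = S"
    "edge_closed (block_component D S)" "vertex_closed D (block_component D S)"
  using assms
  by (auto elim!: blockE intro: edge_closed_component vertex_closed_component dest: component_subset)

end

subsection \<open>Switching two matchings along a component\<close>

definition disagreement :: "'j set \<Rightarrow> 'j set set \<Rightarrow> 'j set \<Rightarrow> 'j set set \<Rightarrow> 'j set" where
  "disagreement X F Y G = {j \<in> J. (j \<in> covered X F) \<noteq> (j \<in> covered Y G)}"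

lemma disagreement_commute: "disagreement X F Y G = disagreement Y G X F"
  unfolding disagreement_def by auto

lemma disagreement_subset: "disagreement X F Y G \<subseteq> J"
  unfolding disagreement_def by auto

lemma external_disagreement:
  "F \<subseteq> E \<Longrightarrow> G \<subseteq> E \<Longrightarrow> X \<subseteq> A \<Longrightarrow> Y \<subseteq> A \<Longrightarrow> A \<inter> disagreement X F Y G = sym_diff X Y"
  using covered_external_iff external_subset unfolding disagreement_def by blast

lemma edge_closed_disagreement:
  assumes "X \<subseteq> A" "F \<subseteq> E" "Y \<subseteq> A" "G \<subseteq> E"
  shows "edge_closed (disagreement X F Y G)"
  unfolding edge_closed_def
proof (intro ballI impI subsetI)
  fix e k assume "e \<in> E" "e \<inter> disagreement X F Y G \<noteq> {}" "k \<in> e"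
  then obtain j where "j \<in> e" "j \<in> disagreement X F Y G"
    by blast
  moreover have "k \<in> J"
    using edge_subset \<open>e \<in> E\<close> \<open>k \<in> e\<close> by blast
  ultimately show "k \<in> disagreement X F Y G"
    using covered_internal_iff[OF assms(1,2) \<open>e \<in> E\<close>] covered_internal_iff[OF assms(3,4) \<open>e \<in> E\<close>]
      \<open>k \<in> e\<close> unfolding disagreement_def by blast
qed

text \<open>Among three incidences of the disagreement set at one vertex, two are covered by the same
  side, which is impossible for matchings.\<close>

lemma two_per_vertex_disagreement:
  assumes "is_matching X F" "is_matching Y G"
  shows "two_per_vertex (disagreement X F Y G)"
  unfolding two_per_vertex_def
proof (intro ballI impI)
  let ?D = "disagreement X F Y G"
  have same_side: "j = k"
    if "j \<in> ?D" "k \<in> ?D" "inc j = inc k" "(j \<in> covered X F) = (k \<in> covered X F)" for j k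
    using that is_matching_inj[OF assms(1), of j k] is_matching_inj[OF assms(2), of j k]
    unfolding disagreement_def by auto
  fix j1 j2 j3 assume j: "j1 \<in> ?D" "j2 \<in> ?D" "j3 \<in> ?D" "inc j1 = inc j2" "inc j2 = inc j3"
  consider "(j1 \<in> covered X F) = (j2 \<in> covered X F)" | "(j2 \<in> covered X F) = (j3 \<in> covered X F)"
    | "(j1 \<in> covered X F) = (j3 \<in> covered X F)"
    by blast
  then show "j1 = j2 \<or> j2 = j3 \<or> j1 = j3"
    using same_side[of j1 j2] same_side[of j2 j3] same_side[of j1 j3] j by cases auto
qed

definition swap_within :: "'j set \<Rightarrow> 'j set set \<Rightarrow> 'j set set \<Rightarrow> 'j set set" where
  "swap_within C F G = splice (\<lambda>e. e \<inter> C \<noteq> {}) F G"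

lemma swap_within_subset: "F \<subseteq> E \<Longrightarrow> G \<subseteq> E \<Longrightarrow> swap_within C F G \<subseteq> E"
  unfolding swap_within_def by (rule splice_subset)

lemma covered_switch:
  assumes X: "X \<subseteq> A" and Y: "Y \<subseteq> A" and F: "F \<subseteq> E" and G: "G \<subseteq> E"
    and C: "C \<subseteq> disagreement X F Y G" "edge_closed C" and j: "j \<in> J"
  shows "j \<in> covered (sym_diff X (C \<inter> A)) (swap_within C F G) \<longleftrightarrow>
    (if j \<in> C then j \<in> covered Y G else j \<in> covered X F)"
proof (cases "j \<in> A")
  case True
  have "j \<in> C \<Longrightarrow> j \<in> covered Y G \<longleftrightarrow> j \<notin> covered X F"
    using C(1) unfolding disagreement_def by blast
  then show ?thesis
    using covered_external_iff[OF swap_within_subset[OF F G] True] covered_external_iff[OF F True]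
      True by auto
next
  case False
  then obtain e where e: "e \<in> E" "j \<in> e"
    using Union_edges j by blast
  have "sym_diff X (C \<inter> A) \<subseteq> A"
    using X by blast
  then have "j \<in> covered (sym_diff X (C \<inter> A)) (swap_within C F G) \<longleftrightarrow> e \<in> swap_within C F G"
    by (rule covered_internal_iff[OF _ swap_within_subset[OF F G] e])
  moreover have "e \<inter> C \<noteq> {} \<longleftrightarrow> j \<in> C"
    using C(2) e unfolding edge_closed_def by blast
  ultimately show ?thesis
    using covered_internal_iff[OF X F e] covered_internal_iff[OF Y G e]
    unfolding swap_within_def splice_def by auto
qed

lemma deg_switch:
  assumes X: "X \<subseteq> A" and Y: "Y \<subseteq> A" and F: "F \<subseteq> E" and G: "G \<subseteq> E"
    and C: "C \<subseteq> disagreement X F Y G" "edge_closed C" "vertex_closed (disagreement X F Y G) C"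
  shows "deg J inc (sym_diff X (C \<inter> A)) (swap_within C F G) v =
    (if v \<in> inc ` C then deg J inc Y G v else deg J inc X F v)"
proof (cases "v \<in> inc ` C")
  case True
  have "{j \<in> J. inc j = v \<and> j \<in> covered (sym_diff X (C \<inter> A)) (swap_within C F G)}
      = {j \<in> J. inc j = v \<and> j \<in> covered Y G}"
  proof (intro Collect_cong conj_cong refl)
    fix j assume j: "j \<in> J" "inc j = v"
    show "j \<in> covered (sym_diff X (C \<inter> A)) (swap_within C F G) \<longleftrightarrow> j \<in> covered Y G"
    proof (cases "j \<in> C")
      case False
      then have "j \<notin> disagreement X F Y G"
        using True C(3) j unfolding vertex_closed_def by blast
      then show ?thesis
        using covered_switch[OF X Y F G C(1,2) j(1)] False j(1) unfolding disagreement_def by simp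
    qed (use covered_switch[OF X Y F G C(1,2) j(1)] in simp)
  qed
  then show ?thesis
    using True unfolding deg_eq_card_covered by simp
next
  case False
  have "{j \<in> J. inc j = v \<and> j \<in> covered (sym_diff X (C \<inter> A)) (swap_within C F G)}
      = {j \<in> J. inc j = v \<and> j \<in> covered X F}"
  proof (intro Collect_cong conj_cong refl)
    fix j assume "j \<in> J" "inc j = v"
    then show "j \<in> covered (sym_diff X (C \<inter> A)) (swap_within C F G) \<longleftrightarrow> j \<in> covered X F"
      using covered_switch[OF X Y F G C(1,2)] False by auto
  qed
  then show ?thesis
    using False unfolding deg_eq_card_covered by simp
qed

context
  fixes X Y :: "'j set" and F G :: "'j set set" and C :: "'j set"
  assumes X: "X \<subseteq> A" and Y: "Y \<subseteq> A" and F: "F \<subseteq> E" and G: "G \<subseteq> E"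
    and C_subset: "C \<subseteq> disagreement X F Y G" and C_edge_closed: "edge_closed C"
    and C_vertex_closed: "vertex_closed (disagreement X F Y G) C"
begin

private lemma C_subset': "C \<subseteq> disagreement Y G X F"
  using C_subset disagreement_commute by blast

private lemma C_vertex_closed': "vertex_closed (disagreement Y G X F) C"
  using C_vertex_closed disagreement_commute by simp

lemma disagreement_switch:
  "disagreement (sym_diff X (C \<inter> A)) (swap_within C F G) (sym_diff Y (C \<inter> A)) (swap_within C G F)
   = disagreement X F Y G"
  using covered_switch[OF X Y F G C_subset C_edge_closed] covered_switch[OF Y X G F C_subset' C_edge_closed]
  unfolding disagreement_def by (auto split: if_splits)

lemma is_matching_switch:
  assumes "is_matching X F" "is_matching Y G"
  shows "is_matching (sym_diff X (C \<inter> A)) (swap_within C F G)"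
  using assms deg_switch[OF X Y F G C_subset C_edge_closed C_vertex_closed] unfolding is_matching_def by simp

lemma wt_switch:
  assumes "is_matching X F" "is_matching Y G"
  shows "wt J V inc w lam (sym_diff X (C \<inter> A)) (swap_within C F G) *
      wt J V inc w lam (sym_diff Y (C \<inter> A)) (swap_within C G F) =
    wt J V inc w lam X F * wt J V inc w lam Y G"
proof -
  let ?P = "\<lambda>v. v \<in> inc ` C"
  let ?Z = "\<lambda>X F. {v \<in> V. deg J inc X F v = 0}"
  have zeros: "?Z (sym_diff X (C \<inter> A)) (swap_within C F G) = splice ?P (?Z X F) (?Z Y G)"
    "?Z (sym_diff Y (C \<inter> A)) (swap_within C G F) = splice ?P (?Z Y G) (?Z X F)"
    using deg_switch[OF X Y F G C_subset C_edge_closed C_vertex_closed]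
      deg_switch[OF Y X G F C_subset' C_edge_closed C_vertex_closed']
    unfolding splice_def by auto
  have "finite F" "finite G"
    using F G finite_E finite_subset by auto
  then have weights: "prod w (swap_within C F G) * prod w (swap_within C G F) = prod w F * prod w G"
    unfolding swap_within_def by (rule prod_splice)
  have fugacities: "prod lam (splice ?P (?Z X F) (?Z Y G)) * prod lam (splice ?P (?Z Y G) (?Z X F))
      = prod lam (?Z X F) * prod lam (?Z Y G)"
    using finite_V by (intro prod_splice) auto
  have matching_Y: "is_matching (sym_diff Y (C \<inter> A)) (swap_within C G F)"
    using assms deg_switch[OF Y X G F C_subset' C_edge_closed C_vertex_closed']
    unfolding is_matching_def by simp
  have rearrange: "(a * b) * (c * d) = (a * c) * (b * d)" for a b c d :: rat
    by (simp add: ac_simps)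
  show ?thesis
    unfolding wt_is_matching[OF assms(1)] wt_is_matching[OF assms(2)]
      wt_is_matching[OF is_matching_switch[OF assms]] wt_is_matching[OF matching_Y] zeros
    by (subst (1 2) rearrange) (simp only: weights fugacities)
qed

end

definition matching_pairs :: "'j set \<Rightarrow> 'j set \<Rightarrow> 'j set set \<Rightarrow> ('j set set \<times> 'j set set) set" where
  "matching_pairs X Y M = {(F, G). F \<subseteq> E \<and> G \<subseteq> E \<and> is_matching X F \<and> is_matching Y G \<and>
     blocks (disagreement X F Y G) = M}"

definition winding_weight :: "'j set \<Rightarrow> 'j set \<Rightarrow> 'j set set \<Rightarrow> rat" where
  "winding_weight X Y M =
     (\<Sum>(F, G)\<in>matching_pairs X Y M. wt J V inc w lam X F * wt J V inc w lam Y G)"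

fun switch :: "'j set \<Rightarrow> 'j set \<Rightarrow> 'j set \<Rightarrow> 'j set set \<times> 'j set set \<Rightarrow> 'j set set \<times> 'j set set" where
  "switch X Y S (F, G) =
     (let C = block_component (disagreement X F Y G) S in (swap_within C F G, swap_within C G F))"

lemma switch_matching_pairs:
  assumes X: "X \<subseteq> A" and Y: "Y \<subseteq> A" and p: "(F, G) \<in> matching_pairs X Y M" and S: "S \<in> M"
  shows "switch X Y S (F, G) \<in> matching_pairs (sym_diff X S) (sym_diff Y S) M"
    "switch (sym_diff X S) (sym_diff Y S) S (switch X Y S (F, G)) = (F, G)"
    "wt J V inc w lam (sym_diff X S) (fst (switch X Y S (F, G))) *
       wt J V inc w lam (sym_diff Y S) (snd (switch X Y S (F, G))) =
     wt J V inc w lam X F * wt J V inc w lam Y G"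
proof -
  define D where "D = disagreement X F Y G"
  define C where "C = block_component D S"
  have F: "F \<subseteq> E" and G: "G \<subseteq> E" and matchings: "is_matching X F" "is_matching Y G"
    and M: "blocks D = M"
    using p unfolding matching_pairs_def D_def by auto
  have "edge_closed D" "two_per_vertex D" "D \<subseteq> J" "S \<in> blocks D"
    using edge_closed_disagreement[OF X F Y G] two_per_vertex_disagreement[OF matchings]
      disagreement_subset M S unfolding D_def by auto
  note C_props = block_component_props[OF this, folded C_def]
  have C_subset: "C \<subseteq> disagreement X F Y G" "C \<subseteq> disagreement Y G X F"
    and C_vertex_closed: "vertex_closed (disagreement X F Y G) C" "vertex_closed (disagreement Y G X F) C"
    using C_props disagreement_commute unfolding D_def by auto
  have switched: "switch X Y S (F, G) = (swap_within C F G, swap_within C G F)"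
    unfolding C_def D_def by (simp add: Let_def)
  have same_disagreement: "disagreement (sym_diff X S) (swap_within C F G) (sym_diff Y S) (swap_within C G F) = D"
    using disagreement_switch[OF X Y F G C_subset(1) C_props(3) C_vertex_closed(1)]
    unfolding C_props(2) D_def .
  show "switch X Y S (F, G) \<in> matching_pairs (sym_diff X S) (sym_diff Y S) M"
    using is_matching_switch[OF X Y F G C_subset(1) C_props(3) C_vertex_closed(1) matchings]
      is_matching_switch[OF Y X G F C_subset(2) C_props(3) C_vertex_closed(2) matchings(2,1)]
      swap_within_subset[OF F G] swap_within_subset[OF G F] same_disagreement M
    unfolding switched matching_pairs_def C_props(2) by simp
  show "switch (sym_diff X S) (sym_diff Y S) S (switch X Y S (F, G)) = (F, G)"
    unfolding switched using same_disagreement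
    by (simp add: Let_def C_def swap_within_def splice_splice)
  show "wt J V inc w lam (sym_diff X S) (fst (switch X Y S (F, G))) *
       wt J V inc w lam (sym_diff Y S) (snd (switch X Y S (F, G))) =
     wt J V inc w lam X F * wt J V inc w lam Y G"
    using wt_switch[OF X Y F G C_subset(1) C_props(3) C_vertex_closed(1) matchings]
    unfolding switched C_props(2) by simp
qed

lemma winding_weight_nonneg: "0 \<le> winding_weight X Y M"
  unfolding winding_weight_def matching_pairs_def
  by (rule sum_nonneg) (auto intro!: mult_nonneg_nonneg wt_nonneg)

lemma winding_weight_switch:
  assumes X: "X \<subseteq> A" and Y: "Y \<subseteq> A" and S: "S \<subseteq> A" "S \<in> M"
  shows "winding_weight X Y M = winding_weight (sym_diff X S) (sym_diff Y S) M"
  unfolding winding_weight_def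
proof (rule sum.reindex_bij_witness[of _ "switch (sym_diff X S) (sym_diff Y S) S" "switch X Y S"])
  fix p assume p: "p \<in> matching_pairs X Y M"
  obtain F G where FG: "p = (F, G)"
    by fastforce
  note switch = switch_matching_pairs[OF X Y p[unfolded FG] S(2)]
  show "switch (sym_diff X S) (sym_diff Y S) S (switch X Y S p) = p"
    "switch X Y S p \<in> matching_pairs (sym_diff X S) (sym_diff Y S) M"
    using switch(1,2) unfolding FG by simp_all
  show "(\<lambda>(F, G). wt J V inc w lam (sym_diff X S) F * wt J V inc w lam (sym_diff Y S) G) (switch X Y S p)
      = (\<lambda>(F, G). wt J V inc w lam X F * wt J V inc w lam Y G) p"
    using switch(3) unfolding FG by (simp add: case_prod_beta)
next
  fix p assume p: "p \<in> matching_pairs (sym_diff X S) (sym_diff Y S) M"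
  obtain F G where FG: "p = (F, G)"
    by fastforce
  have "sym_diff X S \<subseteq> A" "sym_diff Y S \<subseteq> A"
    using X Y S(1) by auto
  note switch = switch_matching_pairs[OF this p[unfolded FG] S(2)]
  have "sym_diff (sym_diff X S) S = X" "sym_diff (sym_diff Y S) S = Y"
    by auto
  note switch = switch[unfolded this]
  show "switch X Y S (switch (sym_diff X S) (sym_diff Y S) S p) = p"
    "switch (sym_diff X S) (sym_diff Y S) S p \<in> matching_pairs X Y M"
    using switch(1,2) unfolding FG by simp_all
qed

lemma signature_mult:
  assumes X: "X \<subseteq> A" and Y: "Y \<subseteq> A"
  shows "signature J V inc A E w lam X * signature J V inc A E w lam Y
    = (\<Sum>M\<in>Match' (sym_diff X Y). winding_weight X Y M)"
proof -
  let ?f = "\<lambda>(F, G). wt J V inc w lam X F * wt J V inc w lam Y G"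
  let ?P = "{(F, G). F \<subseteq> E \<and> G \<subseteq> E \<and> is_matching X F \<and> is_matching Y G}"
  let ?blocks = "\<lambda>(F, G). blocks (disagreement X F Y G)"
  have "signature J V inc A E w lam X * signature J V inc A E w lam Y = sum ?f (Pow E \<times> Pow E)"
    unfolding signature_def sum_product sum.cartesian_product ..
  also have "\<dots> = sum ?f ?P"
  proof (rule sum.mono_neutral_right)
    show "finite (Pow E \<times> Pow E)"
      using finite_E by simp
    show "\<forall>p\<in>Pow E \<times> Pow E - ?P. ?f p = 0"
      using wt_not_matching by fastforce
  qed auto
  also have "\<dots> = (\<Sum>M\<in>Match' (sym_diff X Y). sum ?f {p \<in> ?P. ?blocks p = M})"
  proof (rule sum.group[symmetric])
    show "finite ?P"
      using finite_E by (auto intro: finite_subset[of _ "Pow E \<times> Pow E"])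
    show "finite (Match' (sym_diff X Y))"
      using X Y external_subset finite_J by (intro finite_Match') (auto intro: finite_subset)
    show "?blocks ` ?P \<subseteq> Match' (sym_diff X Y)"
    proof clarify
      fix F G assume "F \<subseteq> E" "G \<subseteq> E" "is_matching X F" "is_matching Y G"
      then show "blocks (disagreement X F Y G) \<in> Match' (sym_diff X Y)"
        using blocks_in_Match'[OF edge_closed_disagreement two_per_vertex_disagreement disagreement_subset]
          external_disagreement X Y by metis
    qed
  qed
  also have "\<dots> = (\<Sum>M\<in>Match' (sym_diff X Y). winding_weight X Y M)"
    unfolding winding_weight_def matching_pairs_def by (intro sum.cong) auto
  finally show ?thesis .
qed

end

theorem lemma18:
  fixes J :: "'j set" and V :: "'v set" and inc :: "'j \<Rightarrow> 'v" and A :: "'j set"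
    and E :: "'j set set" and w :: "'j set \<Rightarrow> rat" and lam :: "'v \<Rightarrow> rat"
  assumes "matchings_circuit J V inc A E w lam"
  shows "windable A (signature J V inc A E w lam)"
proof -
  interpret circuit J V inc A E w lam
    using assms by (rule circuitI)
  show ?thesis
    unfolding windable_def
  proof (intro exI[of _ winding_weight] conjI allI impI ballI)
    fix X Y M S assume "X \<subseteq> A" "Y \<subseteq> A" "M \<in> Match' (sym_diff X Y)" "S \<in> M"
    moreover from this have "S \<subseteq> A"
      using Match'_block_subset by blast
    ultimately show "winding_weight X Y M = winding_weight (sym_diff X S) (sym_diff Y S) M"
      using winding_weight_switch by blast
  qed (simp_all add: winding_weight_nonneg signature_mult)
qed

end
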